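(* Let $0<\tau<1$, $x\in\mathbb{Z}$, $t\ge0$, and $$\varphi(\eta)=\Big(\frac{1-\eta}{1-\tau\eta}\Big)^{x}e^{\left[\frac{1}{1-\eta}-\frac{1}{1-\tau\eta}\right]t}\cdot\frac{1}{\tau^{-1}-\eta}.$$ Let $\Gamma$ be a closed curve going once counterclockwise around $\eta=1$, with $\eta=\tau^{-1}$ on the outside, which is star-shaped with respect to $\eta=0$. Let $K_1$ be the operator on $L^2(\Gamma)$ with kernel $K_1(\eta,\eta')=\frac{\varphi(\tau\eta)}{\eta'-\tau\eta}$. Then for $\lambda\in\mathbb{C}$, $$\det(I-\lambda K_1)=\prod_{k=1}^{\infty}(1-\lambda\tau^k).$$
   Context: $\det(I-\lambda K_1)$ denotes the Fredholm determinant on $L^2(\Gamma)$, where integrals along $\Gamma$ include the factor $\frac{1}{2\pi i}$. *)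

theory Defs
  imports "HOL-Complex_Analysis.Complex_Analysis"
begin

fun multi_cint :: "(real \<Rightarrow> complex) \<Rightarrow> nat \<Rightarrow> ((nat \<Rightarrow> complex) \<Rightarrow> complex) \<Rightarrow> complex" where
  "multi_cint \<Gamma> 0 F = F (\<lambda>_. 0)"
| "multi_cint \<Gamma> (Suc n) F =
     contour_integral \<Gamma> (\<lambda>z. multi_cint \<Gamma> n (\<lambda>v. F (v(n := z)))) / (2 * pi * \<i>)"

definition kernel_det :: "(complex \<Rightarrow> complex \<Rightarrow> complex) \<Rightarrow> nat \<Rightarrow> (nat \<Rightarrow> complex) \<Rightarrow> complex" where
  "kernel_det K n v = (\<Sum>p | p permutes {..<n}. of_int (sign p) * (\<Prod>i<n. K (v i) (v (p i))))"

definition fredholm_term :: "(real \<Rightarrow> complex) \<Rightarrow> (complex \<Rightarrow> complex \<Rightarrow> complex) \<Rightarrow> complex \<Rightarrow> nat \<Rightarrow> complex" where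
  "fredholm_term \<Gamma> K lam n = (- lam) ^ n / of_nat (fact n) * multi_cint \<Gamma> n (kernel_det K n)"

definition fredholm_det :: "(real \<Rightarrow> complex) \<Rightarrow> (complex \<Rightarrow> complex \<Rightarrow> complex) \<Rightarrow> complex \<Rightarrow> complex" where
  "fredholm_det \<Gamma> K lam = (\<Sum>n. fredholm_term \<Gamma> K lam n)"

definition phi :: "real \<Rightarrow> int \<Rightarrow> real \<Rightarrow> complex \<Rightarrow> complex" where
  "phi \<tau> x t \<eta> = ((1 - \<eta>) / (1 - of_real \<tau> * \<eta>)) powi x
      * exp ((1 / (1 - \<eta>) - 1 / (1 - of_real \<tau> * \<eta>)) * of_real t)
      * (1 / (1 / of_real \<tau> - \<eta>))"

definition K1 :: "real \<Rightarrow> int \<Rightarrow> real \<Rightarrow> complex \<Rightarrow> complex \<Rightarrow> complex" where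
  "K1 \<tau> x t \<eta> \<eta>' = phi \<tau> x t (of_real \<tau> * \<eta>) / (\<eta>' - of_real \<tau> * \<eta>)"

end

theory Submission
  imports Defs "HOL-Combinatorics.Multiset_Permutations"
begin

text \<open>The \<open>m\<close>-th power of \<open>K\<^sub>1\<close> has the kernel
  \<open>\<Prod>k=1..m. \<phi>(\<tau>\<^sup>k \<eta>) / (\<eta>' - \<tau>\<^sup>m \<eta>)\<close>. Star-shapedness of \<open>\<Gamma>\<close> keeps the
  singularities \<open>1/\<tau>\<^sup>k\<close> of the numerator outside \<open>\<Gamma>\<close>, so Cauchy's formula picks up only the
  pole of the denominator: composing kernels adds their exponents, and
  \<open>tr K\<^sub>1\<^sup>m = \<tau>\<^sup>m / (1 - \<tau>\<^sup>m) = \<Sum>a\<ge>1. \<tau>\<^sup>a\<^sup>m\<close>.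
  Expanding the determinant of the \<open>n\<close>-th Fredholm term along its first row and integrating out
  one variable at a time therefore produces the recursion satisfied by the sum of
  \<open>\<Prod>i. \<tau>^a\<^sub>i\<close> over distinct \<open>a\<^sub>1, \<dots>, a\<^sub>n \<ge> 1\<close>, which is \<open>n!\<close> times the elementary
  symmetric function \<open>e\<^sub>n(\<tau>, \<tau>\<^sup>2, \<dots>)\<close>. Hence \<open>det(I - \<lambda>K\<^sub>1) = \<Sum>n. (-\<lambda>)\<^sup>n e\<^sub>n(\<tau>, \<tau>\<^sup>2, \<dots>)\<close>,
  and truncating to \<open>\<tau>, \<dots>, \<tau>\<^sup>N\<close> and applying Tannery's theorem turns this into
  \<open>\<Prod>k\<ge>1. (1 - \<lambda>\<tau>\<^sup>k)\<close>.\<close>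

section \<open>Iterated contour integrals\<close>

definition vcons :: "complex \<Rightarrow> (nat \<Rightarrow> complex) \<Rightarrow> nat \<Rightarrow> complex" where
  "vcons z w = (\<lambda>i. case i of 0 \<Rightarrow> z | Suc j \<Rightarrow> w j)"

lemma vcons_0 [simp]: "vcons z w 0 = z"
  and vcons_Suc [simp]: "vcons z w (Suc j) = w j"
  by (simp_all add: vcons_def)

lemma vcons_upd: "vcons z (v(n := z')) = (vcons z v)(Suc n := z')"
  by (auto simp: vcons_def fun_eq_iff split: nat.split)

lemma multi_cint_Suc_inner:
  "multi_cint \<Gamma> (Suc n) F =
     multi_cint \<Gamma> n (\<lambda>w. contour_integral \<Gamma> (\<lambda>z. F (vcons z w)) / (2 * pi * \<i>))"
proof (induction n arbitrary: F)
  case 0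
  have "(\<lambda>_. 0)(0 := z) = vcons z (\<lambda>_. 0)" for z
    by (auto simp: vcons_def fun_eq_iff split: nat.split)
  then show ?case by simp
next
  case (Suc n)
  have "multi_cint \<Gamma> (Suc (Suc n)) F =
      contour_integral \<Gamma> (\<lambda>z'. multi_cint \<Gamma> (Suc n) (\<lambda>v. F (v(Suc n := z')))) / (2 * pi * \<i>)"
    by simp
  also have "\<dots> = contour_integral \<Gamma> (\<lambda>z'. multi_cint \<Gamma> n (\<lambda>w. contour_integral \<Gamma>
        (\<lambda>z. F ((vcons z w)(Suc n := z'))) / (2 * pi * \<i>))) / (2 * pi * \<i>)"
    by (simp only: Suc.IH)
  finally show ?case by (simp add: vcons_upd)
qed

definition vecs_on :: "'a set \<Rightarrow> nat \<Rightarrow> (nat \<Rightarrow> 'a::zero) set" where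
  "vecs_on S n = {v. (\<forall>i<n. v i \<in> S) \<and> (\<forall>i\<ge>n. v i = 0)}"

lemma vecs_on_upd: "v \<in> vecs_on S n \<Longrightarrow> z \<in> S \<Longrightarrow> v(n := z) \<in> vecs_on S (Suc n)"
  by (auto simp: vecs_on_def less_Suc_eq)

lemma multi_cint_cong:
  "(\<And>v. v \<in> vecs_on (path_image \<Gamma>) n \<Longrightarrow> F v = G v) \<Longrightarrow> multi_cint \<Gamma> n F = multi_cint \<Gamma> n G"
proof (induction n arbitrary: F G)
  case 0
  then show ?case using 0[of "\<lambda>_. 0"] by (simp add: vecs_on_def)
next
  case (Suc n)
  have "contour_integral \<Gamma> (\<lambda>z. multi_cint \<Gamma> n (\<lambda>v. F (v(n := z)))) =
        contour_integral \<Gamma> (\<lambda>z. multi_cint \<Gamma> n (\<lambda>v. G (v(n := z))))"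
    by (intro contour_integral_eq Suc.IH Suc.prems vecs_on_upd)
  then show ?case by simp
qed

fun has_multi_cint :: "(real \<Rightarrow> complex) \<Rightarrow> nat \<Rightarrow> ((nat \<Rightarrow> complex) \<Rightarrow> complex) \<Rightarrow> complex \<Rightarrow> bool" where
  "has_multi_cint \<Gamma> 0 F V \<longleftrightarrow> V = F (\<lambda>_. 0)"
| "has_multi_cint \<Gamma> (Suc n) F V \<longleftrightarrow> (\<exists>G. (\<forall>w\<in>vecs_on (path_image \<Gamma>) n.
       ((\<lambda>z. F (vcons z w)) has_contour_integral (2 * pi * \<i> * G w)) \<Gamma>) \<and> has_multi_cint \<Gamma> n G V)"

lemma has_multi_cint_imp_multi_cint: "has_multi_cint \<Gamma> n F V \<Longrightarrow> multi_cint \<Gamma> n F = V"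
proof (induction n arbitrary: F V)
  case (Suc n)
  then obtain G where G: "\<And>w. w \<in> vecs_on (path_image \<Gamma>) n \<Longrightarrow>
       ((\<lambda>z. F (vcons z w)) has_contour_integral (2 * pi * \<i> * G w)) \<Gamma>"
    and V: "has_multi_cint \<Gamma> n G V" by auto
  have "multi_cint \<Gamma> (Suc n) F = multi_cint \<Gamma> n G"
    unfolding multi_cint_Suc_inner
    by (rule multi_cint_cong) (use G contour_integral_unique in fastforce)
  then show ?case using Suc.IH[OF V] by simp
qed simp

lemma has_multi_cint_0: "has_multi_cint \<Gamma> n (\<lambda>_. 0) 0"
  by (induction n) (auto intro!: exI[of _ "\<lambda>_. 0"] has_contour_integral_0)

lemma has_multi_cint_lincomb:
  "has_multi_cint \<Gamma> n F V \<Longrightarrow> has_multi_cint \<Gamma> n G W \<Longrightarrow>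
   has_multi_cint \<Gamma> n (\<lambda>v. a * F v + b * G v) (a * V + b * W)"
proof (induction n arbitrary: F G V W)
  case (Suc n)
  from Suc.prems(1) obtain F' where F': "\<And>w. w \<in> vecs_on (path_image \<Gamma>) n \<Longrightarrow>
       ((\<lambda>z. F (vcons z w)) has_contour_integral (2 * pi * \<i> * F' w)) \<Gamma>"
    and V: "has_multi_cint \<Gamma> n F' V" by auto
  from Suc.prems(2) obtain G' where G': "\<And>w. w \<in> vecs_on (path_image \<Gamma>) n \<Longrightarrow>
       ((\<lambda>z. G (vcons z w)) has_contour_integral (2 * pi * \<i> * G' w)) \<Gamma>"
    and W: "has_multi_cint \<Gamma> n G' W" by auto
  have "((\<lambda>z. a * F (vcons z w) + b * G (vcons z w)) has_contour_integral
           (2 * pi * \<i> * (a * F' w + b * G' w))) \<Gamma>" if "w \<in> vecs_on (path_image \<Gamma>) n" for w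
    using has_contour_integral_add[OF has_contour_integral_lmul[OF F'[OF that], of a]
        has_contour_integral_lmul[OF G'[OF that], of b]]
    by (simp add: algebra_simps)
  then show ?case using Suc.IH[OF V W] by (simp only: has_multi_cint.simps) (intro exI[of _ "\<lambda>w. a * F' w + b * G' w"] conjI ballI)
qed simp

lemma has_multi_cint_sum:
  "finite B \<Longrightarrow> (\<And>b. b \<in> B \<Longrightarrow> has_multi_cint \<Gamma> n (F b) (V b)) \<Longrightarrow>
   has_multi_cint \<Gamma> n (\<lambda>v. \<Sum>b\<in>B. F b v) (\<Sum>b\<in>B. V b)"
proof (induction B rule: finite_induct)
  case empty
  then show ?case using has_multi_cint_0 by simp
next
  case (insert b B)
  then show ?case using has_multi_cint_lincomb[of \<Gamma> n "F b" "V b" _ _ 1 1] by simp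
qed

section \<open>Star-shaped loops\<close>

locale star_loop =
  fixes \<Gamma> :: "real \<Rightarrow> complex"
  assumes valid: "valid_path \<Gamma>" and simple: "simple_path \<Gamma>"
    and loop: "pathfinish \<Gamma> = pathstart \<Gamma>"
    and positive: "\<exists>z\<in>inside (path_image \<Gamma>). winding_number \<Gamma> z = 1"
    and star: "\<And>z s. z \<in> path_image \<Gamma> \<Longrightarrow> 0 \<le> s \<Longrightarrow> s < 1 \<Longrightarrow>
                 complex_of_real s * z \<in> inside (path_image \<Gamma>)"
begin

abbreviation "P \<equiv> path_image \<Gamma>"

lemma winding_number_outside: "z \<in> outside P \<Longrightarrow> winding_number \<Gamma> z = 0"
  using winding_number_zero_in_outside valid_path_imp_path[OF valid] loop by blast

lemma winding_number_inside: "z \<in> inside P \<Longrightarrow> winding_number \<Gamma> z = 1"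
  using simple_closed_path_winding_number_inside[OF simple] positive by force

text \<open>Star-shapedness with respect to boundary points propagates to the interior: the ray
  from \<open>0\<close> through an interior point leaves the bounded set \<^term>\<open>inside P\<close> through \<open>P\<close>.\<close>

lemma scale_inside:
  assumes z: "z \<in> inside P" and s: "0 \<le> s" "s < 1"
  shows "complex_of_real s * z \<in> inside P"
proof (cases "z = 0")
  case False
  have "bounded (inside P)"
    using bounded_inside bounded_path_image valid_path_imp_path[OF valid] by blast
  then obtain B where B: "B > 0" "\<And>y. y \<in> inside P \<Longrightarrow> norm y \<le> B" by (meson bounded_pos)
  define R where "R = B / norm z + 1"
  have nz: "norm z > 0" using False by simp
  have R1: "R \<ge> 1" using B nz by (simp add: R_def)
  have "norm (complex_of_real R * z) = R * norm z"
    using R1 by (simp add: norm_mult)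
  also have "\<dots> = B + norm z" using nz by (simp add: R_def field_simps)
  finally have "norm (complex_of_real R * z) = B + norm z" .
  then have Rz_out: "complex_of_real R * z \<notin> inside P" using B nz by force
  define S where "S = closed_segment z (complex_of_real R * z)"
  have "S \<inter> frontier (inside P) \<noteq> {}"
    by (rule connected_Int_frontier) (use z Rz_out in \<open>auto simp: S_def\<close>)
  then obtain y where yS: "y \<in> S" and "y \<in> frontier (inside P)" by blast
  then have yP: "y \<in> P"
    using frontier_inside_subset closed_path_image valid_path_imp_path[OF valid] by blast
  from yS obtain u where u: "0 \<le> u" "u \<le> 1" "y = (1 - u) *\<^sub>R z + u *\<^sub>R (complex_of_real R * z)"
    unfolding S_def in_segment by blast
  define r where "r = 1 - u + u * R"
  have r1: "r \<ge> 1" using u R1 mult_left_mono[of 1 R u] by (simp add: r_def)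
  have "y = complex_of_real r * z" using u(3) by (simp add: r_def scaleR_conv_of_real algebra_simps)
  then have "complex_of_real s * z = complex_of_real (s / r) * y" using r1 by (simp add: field_simps)
  also have "\<dots> \<in> inside P" by (rule star[OF yP]) (use s r1 in \<open>auto simp: divide_simps\<close>)
  finally show ?thesis .
qed (use z in simp)

lemma scale_inside_or_path:
  "z \<in> inside P \<union> P \<Longrightarrow> 0 \<le> s \<Longrightarrow> s < 1 \<Longrightarrow> complex_of_real s * z \<in> inside P"
  using scale_inside star by blast

lemma zero_inside: "0 \<in> inside P"
  using positive scale_inside[of _ 0] by force

lemma Cauchy_integral_formula_inside:
  assumes "finite E" "E \<subseteq> outside P" "g holomorphic_on (- E)" "z \<in> inside P"
  shows "((\<lambda>w. g w / (w - z)) has_contour_integral (2 * pi * \<i> * g z)) \<Gamma>"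
proof -
  have "((\<lambda>w. g w / (w - z)) has_contour_integral (2 * pi * \<i> * winding_number \<Gamma> z * g z)) \<Gamma>"
  proof (rule Cauchy_integral_formula_global[OF _ assms(3) _ valid _ loop])
    show "open (- E)" using assms(1) by (simp add: open_Compl finite_imp_closed)
    show "P \<subseteq> - E - {z}" using assms(2,4) inside_no_overlap outside_no_overlap by blast
  qed (use assms winding_number_outside outside_inside in auto)
  then show ?thesis using winding_number_inside[OF assms(4)] by simp
qed

end

locale star_loop_tau = star_loop +
  fixes \<tau> :: real
  assumes tau_pos: "0 < \<tau>" and tau_less_1: "\<tau> < 1"
    and inverse_tau_outside: "1 / complex_of_real \<tau> \<in> outside P"
begin

lemma tau_power_times_path_inside: "w \<in> P \<Longrightarrow> 1 \<le> a \<Longrightarrow> complex_of_real \<tau> ^ a * w \<in> inside P"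
  using scale_inside_or_path[of w "\<tau> ^ a"] tau_pos tau_less_1 by (simp add: power_less_one_iff)

lemma path_div_tau_power_outside:
  assumes w: "w \<in> P" and b: "1 \<le> b"
  shows "w / complex_of_real \<tau> ^ b \<in> outside P"
proof -
  have "w / complex_of_real \<tau> ^ b \<notin> inside P \<union> P"
  proof
    assume "w / complex_of_real \<tau> ^ b \<in> inside P \<union> P"
    then have "complex_of_real (\<tau> ^ b) * (w / complex_of_real \<tau> ^ b) \<in> inside P"
      by (rule scale_inside_or_path) (use tau_pos tau_less_1 b in \<open>auto simp: power_less_one_iff\<close>)
    then have "w \<in> inside P" using tau_pos by simp
    then show False using w inside_no_overlap by blast
  qed
  then show ?thesis by (simp add: outside_inside)
qed

lemma inverse_tau_power_outside:
  assumes k: "1 \<le> k"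
  shows "(1 / complex_of_real \<tau>) ^ k \<in> outside P"
proof (cases "k = 1")
  case False
  have "(1 / complex_of_real \<tau>) ^ k \<notin> inside P \<union> P"
  proof
    assume "(1 / complex_of_real \<tau>) ^ k \<in> inside P \<union> P"
    then have "complex_of_real (\<tau> ^ (k - 1)) * (1 / complex_of_real \<tau>) ^ k \<in> inside P"
      by (rule scale_inside_or_path) (use tau_pos tau_less_1 k False in \<open>auto simp: power_less_one_iff\<close>)
    moreover have "complex_of_real (\<tau> ^ (k - 1)) * (1 / complex_of_real \<tau>) ^ k = 1 / complex_of_real \<tau>"
      using tau_pos k by (cases k) (auto simp: power_divide field_simps)
    ultimately show False using inverse_tau_outside outside_inside by auto
  qed
  then show ?thesis by (simp add: outside_inside)
qed (use inverse_tau_outside in simp)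

end

section \<open>Powers of the kernel\<close>

text \<open>\<open>K1_pow \<tau> x t m\<close> is the kernel of \<open>K\<^sub>1\<^sup>m\<close> on \<open>L\<^sup>2(\<Gamma>)\<close> (by \<open>K1_pow_compose\<close>).\<close>

definition phi_prod :: "real \<Rightarrow> int \<Rightarrow> real \<Rightarrow> nat \<Rightarrow> complex \<Rightarrow> complex" where
  "phi_prod \<tau> x t m \<eta> = (\<Prod>k\<in>{1..m}. phi \<tau> x t (complex_of_real \<tau> ^ k * \<eta>))"

definition K1_pow :: "real \<Rightarrow> int \<Rightarrow> real \<Rightarrow> nat \<Rightarrow> complex \<Rightarrow> complex \<Rightarrow> complex" where
  "K1_pow \<tau> x t m \<eta> \<eta>' = phi_prod \<tau> x t m \<eta> / (\<eta>' - complex_of_real \<tau> ^ m * \<eta>)"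

lemma K1_pow_1: "K1_pow \<tau> x t 1 = K1 \<tau> x t"
  by (simp add: fun_eq_iff K1_def K1_pow_def phi_prod_def)

lemma phi_prod_0: "\<tau> \<noteq> 0 \<Longrightarrow> phi_prod \<tau> x t m 0 = complex_of_real \<tau> ^ m"
  by (simp add: phi_prod_def phi_def)

lemma phi_prod_add:
  "phi_prod \<tau> x t b u * phi_prod \<tau> x t a (complex_of_real \<tau> ^ b * u) = phi_prod \<tau> x t (b + a) u"
proof (induction a)
  case (Suc a)
  have "phi_prod \<tau> x t (Suc a) (complex_of_real \<tau> ^ b * u) =
        phi_prod \<tau> x t a (complex_of_real \<tau> ^ b * u) * phi \<tau> x t (complex_of_real \<tau> ^ (b + Suc a) * u)"
    by (simp add: phi_prod_def power_add mult_ac)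
  moreover have "phi_prod \<tau> x t (b + Suc a) u =
      phi_prod \<tau> x t (b + a) u * phi \<tau> x t (complex_of_real \<tau> ^ (b + Suc a) * u)"
    by (simp add: phi_prod_def)
  ultimately show ?case using Suc by (simp add: mult_ac)
qed (simp add: phi_prod_def)

lemma phi_holomorphic:
  assumes "\<tau> \<noteq> 0"
  shows "phi \<tau> x t holomorphic_on - {1, 1 / complex_of_real \<tau>}"
proof -
  have "1 - complex_of_real \<tau> * z \<noteq> 0" if "z \<noteq> 1 / complex_of_real \<tau>" for z
    using that assms by (auto simp: field_simps)
  then show ?thesis unfolding phi_def
    by (intro holomorphic_intros) (auto simp: divide_eq_0_iff)
qed

lemma phi_prod_holomorphic:
  assumes "\<tau> \<noteq> 0"
  shows "phi_prod \<tau> x t m holomorphic_on - (\<lambda>k. (1 / complex_of_real \<tau>) ^ k) ` {1..m+1}"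
  unfolding phi_prod_def
proof (rule holomorphic_on_prod)
  fix k assume k: "k \<in> {1..m}"
  let ?S = "- (\<lambda>k. (1 / complex_of_real \<tau>) ^ k) ` {1..m+1}"
  have "complex_of_real \<tau> ^ k * \<eta> \<notin> {1, 1 / complex_of_real \<tau>}" if "\<eta> \<in> ?S" for \<eta>
  proof -
    have "\<eta> \<noteq> (1 / complex_of_real \<tau>) ^ j" if "j \<in> {1..m+1}" for j
      using \<open>\<eta> \<in> ?S\<close> that by blast
    then have "\<eta> \<noteq> (1 / complex_of_real \<tau>) ^ k" "\<eta> \<noteq> (1 / complex_of_real \<tau>) ^ (k + 1)"
      using k by (simp_all del: power_Suc)
    then show ?thesis using assms by (auto simp: power_divide field_simps)
  qed
  then have "(phi \<tau> x t \<circ> (\<lambda>\<eta>. complex_of_real \<tau> ^ k * \<eta>)) holomorphic_on ?S"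
    by (intro holomorphic_on_compose_gen[OF _ phi_holomorphic[OF assms]] holomorphic_intros) auto
  then show "(\<lambda>\<eta>. phi \<tau> x t (complex_of_real \<tau> ^ k * \<eta>)) holomorphic_on ?S" by (simp add: o_def)
qed

context star_loop_tau
begin

lemma inverse_tau_powers_outside: "(\<lambda>k. (1 / complex_of_real \<tau>) ^ k) ` {1..m+1} \<subseteq> outside P"
  using inverse_tau_power_outside by auto

text \<open>The only pole of the integrand inside \<open>\<Gamma>\<close> is \<open>0\<close>, where \<open>phi_prod\<close> takes the value \<open>\<tau>\<^sup>a\<close>.\<close>

lemma K1_pow_diag:
  assumes a: "1 \<le> a"
  shows "((\<lambda>z. K1_pow \<tau> x t a z z) has_contour_integral
           (2 * pi * \<i> * complex_of_real (\<tau> ^ a / (1 - \<tau> ^ a)))) \<Gamma>"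
proof -
  have "\<tau> ^ a < 1" using tau_pos tau_less_1 a by (simp add: power_less_one_iff)
  then have ne: "1 - complex_of_real \<tau> ^ a \<noteq> 0"
    by (metis of_real_eq_1_iff of_real_power right_minus_eq order.irrefl)
  define g where "g z = phi_prod \<tau> x t a z / (1 - complex_of_real \<tau> ^ a)" for z
  have hol: "g holomorphic_on - (\<lambda>k. (1 / complex_of_real \<tau>) ^ k) ` {1..a+1}"
    unfolding g_def using phi_prod_holomorphic tau_pos by (intro holomorphic_intros) auto
  have "((\<lambda>w. g w / (w - 0)) has_contour_integral (2 * pi * \<i> * g 0)) \<Gamma>"
    by (rule Cauchy_integral_formula_inside[OF _ inverse_tau_powers_outside hol zero_inside]) simp
  moreover have "(\<lambda>w. g w / (w - 0)) = (\<lambda>z. K1_pow \<tau> x t a z z)"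
    using ne by (auto simp: fun_eq_iff g_def K1_pow_def field_simps)
  moreover have "g 0 = complex_of_real (\<tau> ^ a / (1 - \<tau> ^ a))"
    using tau_pos by (simp add: g_def phi_prod_0)
  ultimately show ?thesis by simp
qed

lemma K1_pow_compose:
  assumes a: "1 \<le> a" and b: "1 \<le> b" and u: "u \<in> P" and w: "w \<in> P"
  shows "((\<lambda>z. K1_pow \<tau> x t a z w * K1_pow \<tau> x t b u z) has_contour_integral
           (2 * pi * \<i> * K1_pow \<tau> x t (b + a) u w)) \<Gamma>"
proof -
  define E where "E = insert (w / complex_of_real \<tau> ^ a) ((\<lambda>k. (1 / complex_of_real \<tau>) ^ k) ` {1..a+1})"
  have E: "finite E" "E \<subseteq> outside P"
    unfolding E_def using inverse_tau_powers_outside path_div_tau_power_outside[OF w a] by auto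
  define g where "g z = phi_prod \<tau> x t a z * phi_prod \<tau> x t b u / (w - complex_of_real \<tau> ^ a * z)" for z
  have "w - complex_of_real \<tau> ^ a * z \<noteq> 0" if "z \<noteq> w / complex_of_real \<tau> ^ a" for z
    using that tau_pos by (auto simp: field_simps)
  then have hol: "g holomorphic_on - E"
    unfolding g_def E_def using tau_pos
    by (intro holomorphic_intros holomorphic_on_subset[OF phi_prod_holomorphic]) auto
  have "((\<lambda>z. g z / (z - complex_of_real \<tau> ^ b * u)) has_contour_integral
          (2 * pi * \<i> * g (complex_of_real \<tau> ^ b * u))) \<Gamma>"
    by (rule Cauchy_integral_formula_inside[OF E hol tau_power_times_path_inside[OF u b]])
  moreover have "(\<lambda>z. g z / (z - complex_of_real \<tau> ^ b * u)) =
                 (\<lambda>z. K1_pow \<tau> x t a z w * K1_pow \<tau> x t b u z)"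
    by (auto simp: fun_eq_iff g_def K1_pow_def)
  moreover have "g (complex_of_real \<tau> ^ b * u) = K1_pow \<tau> x t (b + a) u w"
    unfolding g_def K1_pow_def by (simp add: phi_prod_add[symmetric] power_add mult_ac)
  ultimately show ?thesis by simp
qed

end

abbreviation perms_below :: "nat \<Rightarrow> (nat \<Rightarrow> nat) set" where
  "perms_below n \<equiv> {p. p permutes {..<n}}"

definition perm_lift :: "(nat \<Rightarrow> nat) \<Rightarrow> nat \<Rightarrow> nat" where
  "perm_lift q = (\<lambda>i. case i of 0 \<Rightarrow> 0 | Suc j \<Rightarrow> Suc (q j))"

lemma perm_lift_0 [simp]: "perm_lift q 0 = 0"
  and perm_lift_Suc [simp]: "perm_lift q (Suc j) = Suc (q j)"
  by (simp_all add: perm_lift_def)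

lemma inj_perm_lift: "inj perm_lift"
  by (rule injI) (metis perm_lift_Suc nat.inject ext)

lemma perm_lift_permutes:
  assumes q: "q permutes {..<n}"
  shows "perm_lift q permutes {..<Suc n}"
proof (rule bij_imp_permutes)
  have "inj (perm_lift q)"
  proof (rule injI)
    fix i j assume "perm_lift q i = perm_lift q j"
    then show "i = j" using permutes_inj[OF q] by (cases i; cases j) (auto dest: injD)
  qed
  moreover have "perm_lift q ` Suc ` {..<n} = Suc ` q ` {..<n}"
    by (simp add: image_image)
  then have "perm_lift q ` {..<Suc n} = {..<Suc n}"
    using permutes_image[OF q] by (simp add: lessThan_Suc_eq_insert_0)
  ultimately show "bij_betw (perm_lift q) {..<Suc n} {..<Suc n}"
    by (simp add: bij_betw_def inj_on_subset[OF _ subset_UNIV])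
  show "perm_lift q i = i" if "i \<notin> {..<Suc n}" for i
    using that permutes_not_in[OF q] by (cases i) auto
qed

lemma perm_lift_transpose:
  "perm_lift (Transposition.transpose a b \<circ> p) = Transposition.transpose (Suc a) (Suc b) \<circ> perm_lift p"
  by (auto simp: fun_eq_iff perm_lift_def Transposition.transpose_def split: nat.split)

lemma sign_perm_lift:
  assumes "q permutes {..<n}"
  shows "sign (perm_lift q) = sign q"
  using assms finite_lessThan
proof (induction rule: permutes_induct)
  case id
  have "perm_lift id = id" by (auto simp: fun_eq_iff perm_lift_def split: nat.split)
  then show ?case by (metis sign_id)
next
  case (swap a b p)
  have p: "permutation p" and lp: "permutation (perm_lift p)"
    using swap.hyps(4) perm_lift_permutes permutes_imp_permutation by blast+
  have "sign (perm_lift (Transposition.transpose a b \<circ> p)) =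
        sign (Transposition.transpose (Suc a) (Suc b)) * sign (perm_lift p)"
    unfolding perm_lift_transpose by (rule sign_compose[OF permutation_swap_id lp])
  also have "\<dots> = sign (Transposition.transpose a b) * sign p"
    using swap.IH \<open>a \<noteq> b\<close> by (simp add: sign_swap_id)
  also have "\<dots> = sign (Transposition.transpose a b \<circ> p)"
    by (rule sign_compose[OF permutation_swap_id p, symmetric])
  finally show ?case .
qed

definition perm_lift_swap :: "nat \<Rightarrow> (nat \<Rightarrow> nat) \<Rightarrow> nat \<Rightarrow> nat" where
  "perm_lift_swap b q = perm_lift q \<circ> Transposition.transpose 0 (Suc b)"

lemma perm_lift_swap_0 [simp]: "perm_lift_swap b q 0 = Suc (q b)"
  and perm_lift_swap_Suc: "perm_lift_swap b q (Suc j) = (if j = b then 0 else Suc (q j))"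
  by (simp_all add: perm_lift_swap_def Transposition.transpose_def)

lemma inj_perm_lift_swap: "inj (perm_lift_swap b)"
proof (rule injI)
  fix q1 q2 assume h: "perm_lift_swap b q1 = perm_lift_swap b q2"
  have "q1 j = q2 j" for j
    using fun_cong[OF h, of 0] fun_cong[OF h, of "Suc j"] by (cases "j = b") (auto simp: perm_lift_swap_Suc)
  then show "q1 = q2" by blast
qed

lemma perm_lift_swap_permutes:
  "q permutes {..<n} \<Longrightarrow> b < n \<Longrightarrow> perm_lift_swap b q permutes {..<Suc n}"
  unfolding perm_lift_swap_def by (auto intro!: permutes_compose permutes_swap_id perm_lift_permutes)

lemma sign_perm_lift_swap:
  assumes "q permutes {..<n}" "b < n"
  shows "sign (perm_lift_swap b q) = - sign q"
proof -
  have "permutation (perm_lift q)"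
    using assms(1) perm_lift_permutes permutes_imp_permutation[OF finite_lessThan] by blast
  then show ?thesis
    unfolding perm_lift_swap_def
    by (simp add: sign_compose[OF _ permutation_swap_id] sign_swap_id sign_perm_lift[OF assms(1)])
qed

lemma perm_lift_image_disjoint:
  "perm_lift ` A \<inter> (\<Union>b<n. perm_lift_swap b ` B) = {}"
  by (force dest: fun_cong[of _ _ 0])

lemma perm_lift_swap_image_disjoint:
  "b \<noteq> b' \<Longrightarrow> perm_lift_swap b ` A \<inter> perm_lift_swap b' ` B = {}"
  by (force dest: fun_cong[of _ _ "Suc b"] simp: perm_lift_swap_Suc)

text \<open>Classifying permutations of \<open>{..<Suc n}\<close> by the preimage \<open>0\<close> or \<open>Suc b\<close> of \<open>0\<close>.\<close>

lemma permutations_Suc: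
  "perms_below (Suc n) = perm_lift ` perms_below n \<union> (\<Union>b<n. perm_lift_swap b ` perms_below n)"
    (is "_ = ?U")
proof -
  have fin: "finite (perms_below m)" for m by (rule finite_permutations[OF finite_lessThan])
  have card: "card (perms_below m) = fact m" for m by (rule card_permutations) auto
  have "card ?U = card (perm_lift ` perms_below n) + (\<Sum>b<n. card (perm_lift_swap b ` perms_below n))"
    using fin perm_lift_image_disjoint perm_lift_swap_image_disjoint
    by (simp add: card_Un_disjoint card_UN_disjoint)
  also have "\<dots> = card (perms_below (Suc n))"
    using card_image[OF inj_on_subset[OF inj_perm_lift subset_UNIV]]
      card_image[OF inj_on_subset[OF inj_perm_lift_swap subset_UNIV]] by (simp add: card)
  finally have "card ?U = card (perms_below (Suc n))" .
  moreover have "?U \<subseteq> perms_below (Suc n)"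
    using perm_lift_permutes perm_lift_swap_permutes by blast
  ultimately show ?thesis using card_subset_eq[OF fin] by metis
qed

lemma sum_permutations_Suc:
  "(\<Sum>p\<in>perms_below (Suc n). f p) =
     (\<Sum>q\<in>perms_below n. f (perm_lift q)) + (\<Sum>b<n. \<Sum>q\<in>perms_below n. f (perm_lift_swap b q))"
  unfolding permutations_Suc
  using finite_permutations[OF finite_lessThan] perm_lift_image_disjoint perm_lift_swap_image_disjoint
  by (simp add: sum.union_disjoint sum.UNION_disjoint sum.reindex inj_on_subset[OF inj_perm_lift]
      inj_on_subset[OF inj_perm_lift_swap])

section \<open>Expansion of the Fredholm determinant\<close>

text \<open>Integrating a Fredholm determinant over one variable merges two kernels into a higher power
  (\<open>K1_pow_compose\<close>), so the induction has to run over determinants whose rows use different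
  members of the family \<open>K1_pow\<close>.\<close>

definition kernel_det_indexed ::
    "(nat \<Rightarrow> complex \<Rightarrow> complex \<Rightarrow> complex) \<Rightarrow> nat \<Rightarrow> (nat \<Rightarrow> nat) \<Rightarrow> (nat \<Rightarrow> complex) \<Rightarrow> complex" where
  "kernel_det_indexed K n m v =
     (\<Sum>p\<in>perms_below n. of_int (sign p) * (\<Prod>i<n. K (m i) (v i) (v (p i))))"

lemma kernel_det_indexed_const_index: "kernel_det_indexed K n (\<lambda>_. k) = kernel_det (K k) n"
  by (simp add: fun_eq_iff kernel_det_indexed_def kernel_det_def)

lemma kernel_det_indexed_0 [simp]: "kernel_det_indexed K 0 m v = 1"
  by (simp add: kernel_det_indexed_def)

definition merge_first :: "(nat \<Rightarrow> nat) \<Rightarrow> nat \<Rightarrow> nat \<Rightarrow> nat" where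
  "merge_first m b = (m \<circ> Suc)(b := m (Suc b) + m 0)"

lemma merge_first_pos: "(\<And>i. 1 \<le> m i) \<Longrightarrow> 1 \<le> merge_first m b i"
  by (simp add: merge_first_def add_increasing)

lemma prod_merge_first:
  assumes "b < n"
  shows "(\<Prod>i<n. K (merge_first m b i) (w i) (w (q i))) =
         K (m (Suc b) + m 0) (w b) (w (q b)) * (\<Prod>j\<in>{..<n}-{b}. K (m (Suc j)) (w j) (w (q j)))"
proof -
  have "(\<Prod>j\<in>{..<n}-{b}. K (merge_first m b j) (w j) (w (q j))) =
        (\<Prod>j\<in>{..<n}-{b}. K (m (Suc j)) (w j) (w (q j)))"
    by (rule prod.cong) (auto simp: merge_first_def)
  then show ?thesis using assms by (simp add: prod.remove merge_first_def)
qed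

text \<open>Laplace expansion along the first row and column; the permutations fixing \<open>0\<close> give the
  first term, those sending \<open>Suc b\<close> to \<open>0\<close> the others.\<close>

lemma kernel_det_indexed_vcons:
  "kernel_det_indexed K (Suc n) m (vcons z w) =
     K (m 0) z z * kernel_det_indexed K n (m \<circ> Suc) w
   - (\<Sum>b<n. \<Sum>q\<in>perms_below n. of_int (sign q) * (K (m 0) z (w (q b)) * K (m (Suc b)) (w b) z *
        (\<Prod>j\<in>{..<n}-{b}. K (m (Suc j)) (w j) (w (q j)))))"
proof -
  define f where "f p = of_int (sign p) * (\<Prod>i<Suc n. K (m i) (vcons z w i) (vcons z w (p i)))" for p
  have "kernel_det_indexed K (Suc n) m (vcons z w) =
        (\<Sum>q\<in>perms_below n. f (perm_lift q)) + (\<Sum>b<n. \<Sum>q\<in>perms_below n. f (perm_lift_swap b q))"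
    unfolding kernel_det_indexed_def f_def by (rule sum_permutations_Suc)
  also have "(\<Sum>q\<in>perms_below n. f (perm_lift q)) = K (m 0) z z * kernel_det_indexed K n (m \<circ> Suc) w"
    unfolding kernel_det_indexed_def sum_distrib_left
    by (intro sum.cong refl) (simp add: f_def prod.lessThan_Suc_shift sign_perm_lift del: prod.lessThan_Suc)
  also have "(\<Sum>b<n. \<Sum>q\<in>perms_below n. f (perm_lift_swap b q)) =
      - (\<Sum>b<n. \<Sum>q\<in>perms_below n. of_int (sign q) * (K (m 0) z (w (q b)) * K (m (Suc b)) (w b) z *
          (\<Prod>j\<in>{..<n}-{b}. K (m (Suc j)) (w j) (w (q j)))))"
    unfolding sum_negf[symmetric]
  proof (intro sum.cong refl)
    fix b q assume b: "b \<in> {..<n}" and q: "q \<in> perms_below n"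
    have "(\<Prod>j<n. K (m (Suc j)) (w j) (vcons z w (perm_lift_swap b q (Suc j)))) =
          K (m (Suc b)) (w b) z * (\<Prod>j\<in>{..<n}-{b}. K (m (Suc j)) (w j) (w (q j)))"
    proof -
      have "(\<Prod>j\<in>{..<n}-{b}. K (m (Suc j)) (w j) (vcons z w (perm_lift_swap b q (Suc j)))) =
            (\<Prod>j\<in>{..<n}-{b}. K (m (Suc j)) (w j) (w (q j)))"
        by (rule prod.cong) (auto simp: perm_lift_swap_Suc)
      then show ?thesis using b by (simp add: prod.remove perm_lift_swap_Suc)
    qed
    then show "f (perm_lift_swap b q) = - (of_int (sign q) * (K (m 0) z (w (q b)) *
        K (m (Suc b)) (w b) z * (\<Prod>j\<in>{..<n}-{b}. K (m (Suc j)) (w j) (w (q j)))))"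
      using b q by (simp add: f_def prod.lessThan_Suc_shift sign_perm_lift_swap mult_ac del: prod.lessThan_Suc)
  qed
  finally show ?thesis by (simp add: comp_def)
qed

definition pow_sum :: "real \<Rightarrow> nat \<Rightarrow> real" where
  "pow_sum \<tau> k = \<tau> ^ k / (1 - \<tau> ^ k)"

text \<open>For \<open>0 < \<tau> < 1\<close> and \<open>m i \<ge> 1\<close>, \<open>dist_pow_sum \<tau> n m\<close> is the sum of
  \<open>\<Prod>i<n. \<tau> ^ (a i * m i)\<close> over all injective \<open>a : {..<n} \<rightarrow> {1..}\<close>
  (\<open>dist_pow_sum_on_tendsto\<close>): the first index ranges freely, and the terms where it coincides with
  another one are subtracted.\<close>

primrec dist_pow_sum :: "real \<Rightarrow> nat \<Rightarrow> (nat \<Rightarrow> nat) \<Rightarrow> real" where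
  "dist_pow_sum \<tau> 0 m = 1"
| "dist_pow_sum \<tau> (Suc n) m =
     pow_sum \<tau> (m 0) * dist_pow_sum \<tau> n (m \<circ> Suc) - (\<Sum>b<n. dist_pow_sum \<tau> n (merge_first m b))"

context star_loop_tau
begin

lemma kernel_det_indexed_has_contour_integral:
  assumes w: "w \<in> vecs_on P n" and m: "\<And>i. 1 \<le> m i"
  shows "((\<lambda>z. kernel_det_indexed (K1_pow \<tau> x t) (Suc n) m (vcons z w)) has_contour_integral
     (2 * pi * \<i> * (complex_of_real (pow_sum \<tau> (m 0)) * kernel_det_indexed (K1_pow \<tau> x t) n (m \<circ> Suc) w
        - (\<Sum>b<n. kernel_det_indexed (K1_pow \<tau> x t) n (merge_first m b) w)))) \<Gamma>"
proof -
  let ?K = "K1_pow \<tau> x t"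
  have wP: "w i \<in> P" if "i < n" for i using w that by (simp add: vecs_on_def)
  have wqP: "w (q b) \<in> P" if "q \<in> perms_below n" "b < n" for q b
    using that wP permutes_in_image[of q "{..<n}" b] by auto
  have diag: "((\<lambda>z. ?K (m 0) z z * kernel_det_indexed ?K n (m \<circ> Suc) w) has_contour_integral
      (2 * pi * \<i> * complex_of_real (pow_sum \<tau> (m 0)) * kernel_det_indexed ?K n (m \<circ> Suc) w)) \<Gamma>"
    using K1_pow_diag[of "m 0" x t] m by (intro has_contour_integral_rmul) (simp add: pow_sum_def)
  have off_diag: "((\<lambda>z. \<Sum>b<n. \<Sum>q\<in>perms_below n. of_int (sign q) * (?K (m 0) z (w (q b)) *
        ?K (m (Suc b)) (w b) z * (\<Prod>j\<in>{..<n}-{b}. ?K (m (Suc j)) (w j) (w (q j))))) has_contour_integral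
      (\<Sum>b<n. \<Sum>q\<in>perms_below n. of_int (sign q) * (2 * pi * \<i> * ?K (m (Suc b) + m 0) (w b) (w (q b)) *
        (\<Prod>j\<in>{..<n}-{b}. ?K (m (Suc j)) (w j) (w (q j)))))) \<Gamma>"
    using m wP wqP
    by (intro has_contour_integral_sum finite_lessThan finite_permutations has_contour_integral_lmul
        has_contour_integral_rmul K1_pow_compose) auto
  have "(\<Sum>b<n. \<Sum>q\<in>perms_below n. of_int (sign q) * (2 * pi * \<i> * ?K (m (Suc b) + m 0) (w b) (w (q b)) *
        (\<Prod>j\<in>{..<n}-{b}. ?K (m (Suc j)) (w j) (w (q j))))) =
      2 * pi * \<i> * (\<Sum>b<n. kernel_det_indexed ?K n (merge_first m b) w)"
    unfolding kernel_det_indexed_def sum_distrib_left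
    by (intro sum.cong refl) (simp add: prod_merge_first mult_ac)
  with has_contour_integral_diff[OF diag off_diag] show ?thesis
    unfolding kernel_det_indexed_vcons by (simp add: algebra_simps)
qed

lemma has_multi_cint_kernel_det_indexed:
  "(\<And>i. 1 \<le> m i) \<Longrightarrow>
   has_multi_cint \<Gamma> n (kernel_det_indexed (K1_pow \<tau> x t) n m) (complex_of_real (dist_pow_sum \<tau> n m))"
proof (induction n arbitrary: m)
  case (Suc n)
  let ?K = "K1_pow \<tau> x t"
  let ?G = "\<lambda>w. complex_of_real (pow_sum \<tau> (m 0)) * kernel_det_indexed ?K n (m \<circ> Suc) w
                - (\<Sum>b<n. kernel_det_indexed ?K n (merge_first m b) w)"
  have diag: "has_multi_cint \<Gamma> n (kernel_det_indexed ?K n (m \<circ> Suc))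
      (complex_of_real (dist_pow_sum \<tau> n (m \<circ> Suc)))"
    using Suc by simp
  have off_diag: "has_multi_cint \<Gamma> n (\<lambda>w. \<Sum>b<n. kernel_det_indexed ?K n (merge_first m b) w)
          (\<Sum>b<n. complex_of_real (dist_pow_sum \<tau> n (merge_first m b)))"
    using Suc merge_first_pos by (intro has_multi_cint_sum) auto
  from has_multi_cint_lincomb[OF diag off_diag, of "complex_of_real (pow_sum \<tau> (m 0))" "-1"]
  have "has_multi_cint \<Gamma> n ?G (complex_of_real (dist_pow_sum \<tau> (Suc n) m))"
    using Suc.prems by simp
  then show ?case
    unfolding has_multi_cint.simps
    by (intro exI[of _ ?G] conjI ballI kernel_det_indexed_has_contour_integral Suc.prems)
qed simp

end

definition dlists :: "nat \<Rightarrow> 'a set \<Rightarrow> 'a list set" where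
  "dlists n A = {xs. distinct xs \<and> length xs = n \<and> set xs \<subseteq> A}"

lemma finite_dlists: "finite A \<Longrightarrow> finite (dlists n A)"
  by (rule finite_subset[OF _ finite_lists_length_eq[of A n]]) (auto simp: dlists_def)

lemma dlists_0 [simp]: "dlists 0 A = {[]}"
  by (auto simp: dlists_def)

lemma sum_dlists_Suc:
  assumes "finite A"
  shows "(\<Sum>ys\<in>dlists (Suc n) A. f ys) = (\<Sum>xs\<in>dlists n A. \<Sum>a\<in>A - set xs. f (a # xs))"
proof -
  have "bij_betw (\<lambda>(xs, a). a # xs) (SIGMA xs:dlists n A. A - set xs) (dlists (Suc n) A)"
  proof (rule bij_betwI')
    fix ys assume "ys \<in> dlists (Suc n) A"
    then obtain a xs where "ys = a # xs" "xs \<in> dlists n A" "a \<in> A - set xs"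
      by (cases ys) (auto simp: dlists_def)
    then show "\<exists>x\<in>SIGMA xs:dlists n A. A - set xs. ys = (case x of (xs, a) \<Rightarrow> a # xs)"
      by auto
  qed (auto simp: dlists_def)
  then have "(\<Sum>ys\<in>dlists (Suc n) A. f ys) = (\<Sum>(xs, a)\<in>(SIGMA xs:dlists n A. A - set xs). f (a # xs))"
    by (simp add: sum.reindex_bij_betw[symmetric] case_prod_unfold)
  also have "\<dots> = (\<Sum>xs\<in>dlists n A. \<Sum>a\<in>A - set xs. f (a # xs))"
    using assms finite_dlists by (subst sum.Sigma) auto
  finally show ?thesis .
qed

lemma prod_set_distinct_conv_nth:
  assumes "distinct xs"
  shows "(\<Prod>a\<in>set xs. f a) = (\<Prod>i<length xs. f (xs ! i))"
proof -
  have "set xs = (!) xs ` {..<length xs}" by (auto simp: set_conv_nth)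
  then show ?thesis using assms by (simp add: prod.reindex inj_on_nth)
qed

lemma sum_set_distinct_conv_nth:
  "distinct xs \<Longrightarrow> (\<Sum>a\<in>set xs. f a) = (\<Sum>i<length xs. f (xs ! i))"
  by (simp add: sum_list_distinct_conv_sum_set[symmetric] sum_list_sum_nth atLeast0LessThan)

definition pow_sum_on :: "real \<Rightarrow> nat set \<Rightarrow> nat \<Rightarrow> real" where
  "pow_sum_on \<tau> A k = (\<Sum>a\<in>A. (\<tau> ^ a) ^ k)"

definition dist_pow_sum_on :: "real \<Rightarrow> nat set \<Rightarrow> nat \<Rightarrow> (nat \<Rightarrow> nat) \<Rightarrow> real" where
  "dist_pow_sum_on \<tau> A n m = (\<Sum>xs\<in>dlists n A. \<Prod>i<n. (\<tau> ^ (xs ! i)) ^ m i)"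

lemma dist_pow_sum_on_Suc:
  assumes A: "finite A"
  shows "dist_pow_sum_on \<tau> A (Suc n) m = pow_sum_on \<tau> A (m 0) * dist_pow_sum_on \<tau> A n (m \<circ> Suc)
     - (\<Sum>b<n. dist_pow_sum_on \<tau> A n (merge_first m b))"
proof -
  define W where "W xs k = (\<Prod>i<n. (\<tau> ^ (xs ! i)) ^ k i)" for xs k
  define g where "g a xs = (\<tau> ^ a) ^ m 0 * W xs (m \<circ> Suc)" for a xs
  have "pow_sum_on \<tau> A (m 0) * dist_pow_sum_on \<tau> A n (m \<circ> Suc) = (\<Sum>xs\<in>dlists n A. \<Sum>a\<in>A. g a xs)"
    unfolding pow_sum_on_def dist_pow_sum_on_def g_def W_def sum_product by (rule sum.swap)
  also have "\<dots> = (\<Sum>xs\<in>dlists n A. \<Sum>a\<in>A - set xs. g a xs) + (\<Sum>xs\<in>dlists n A. \<Sum>a\<in>set xs. g a xs)"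
    unfolding sum.distrib[symmetric]
    by (intro sum.cong refl) (use A in \<open>auto simp: dlists_def intro: sum.subset_diff\<close>)
  also have "(\<Sum>xs\<in>dlists n A. \<Sum>a\<in>A - set xs. g a xs) = dist_pow_sum_on \<tau> A (Suc n) m"
    unfolding dist_pow_sum_on_def sum_dlists_Suc[OF A]
    by (intro sum.cong refl) (simp add: g_def W_def prod.lessThan_Suc_shift del: prod.lessThan_Suc)
  also have "(\<Sum>xs\<in>dlists n A. \<Sum>a\<in>set xs. g a xs) = (\<Sum>b<n. dist_pow_sum_on \<tau> A n (merge_first m b))"
  proof -
    have "(\<Sum>a\<in>set xs. g a xs) = (\<Sum>b<n. W xs (merge_first m b))" if "xs \<in> dlists n A" for xs
    proof -
      have "g (xs ! b) xs = W xs (merge_first m b)" if "b < n" for b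
        using prod_merge_first[OF that, of "\<lambda>k u _. u ^ k" m "\<lambda>i. \<tau> ^ (xs ! i)" id] that
        by (simp add: g_def W_def prod.remove power_add mult_ac)
      then show ?thesis
        using \<open>xs \<in> dlists n A\<close> by (simp add: dlists_def sum_set_distinct_conv_nth)
    qed
    then show ?thesis
      unfolding dist_pow_sum_on_def W_def by (simp add: sum.swap[of _ "{..<n}"])
  qed
  finally show ?thesis by (simp add: comp_def)
qed

section \<open>Elementary symmetric functions of the powers of \<open>\<tau>\<close>\<close>

lemma pow_sum_on_tendsto:
  assumes "0 < \<tau>" "\<tau> < 1" "1 \<le> k"
  shows "(\<lambda>N. pow_sum_on \<tau> {1..N} k) \<longlonglongrightarrow> pow_sum \<tau> k"
proof -
  define r where "r = \<tau> ^ k"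
  have r: "0 < r" "r < 1" using assms by (auto simp: r_def power_less_one_iff)
  have "pow_sum_on \<tau> {1..N} k = r * (\<Sum>a<N. r ^ a)" for N
  proof -
    have "{1..N} = Suc ` {..<N}" by (simp add: image_Suc_lessThan)
    then have "pow_sum_on \<tau> {1..N} k = (\<Sum>a<N. (\<tau> ^ Suc a) ^ k)"
      by (simp add: pow_sum_on_def sum.reindex)
    also have "\<dots> = r * (\<Sum>a<N. r ^ a)"
      unfolding sum_distrib_left r_def by (intro sum.cong refl) (metis power_mult mult.commute power_Suc)
    finally show ?thesis .
  qed
  moreover have "(\<lambda>N. r * (\<Sum>a<N. r ^ a)) \<longlonglongrightarrow> r * (1 / (1 - r))"
    using geometric_sums[of r] r by (intro tendsto_mult_left) (simp add: sums_def)
  ultimately show ?thesis by (simp add: pow_sum_def r_def)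
qed

lemma dist_pow_sum_on_tendsto:
  assumes "0 < \<tau>" "\<tau> < 1" "\<And>i. 1 \<le> m i"
  shows "(\<lambda>N. dist_pow_sum_on \<tau> {1..N} n m) \<longlonglongrightarrow> dist_pow_sum \<tau> n m"
  using assms(3)
proof (induction n arbitrary: m)
  case 0
  then show ?case by (simp add: dist_pow_sum_on_def)
next
  case (Suc n)
  have "(\<lambda>N. pow_sum_on \<tau> {1..N} (m 0) * dist_pow_sum_on \<tau> {1..N} n (m \<circ> Suc)
            - (\<Sum>b<n. dist_pow_sum_on \<tau> {1..N} n (merge_first m b)))
        \<longlonglongrightarrow> pow_sum \<tau> (m 0) * dist_pow_sum \<tau> n (m \<circ> Suc)
            - (\<Sum>b<n. dist_pow_sum \<tau> n (merge_first m b))"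
    using Suc.prems
    by (intro tendsto_intros pow_sum_on_tendsto assms(1,2) Suc.IH merge_first_pos) auto
  then show ?case by (simp add: dist_pow_sum_on_Suc)
qed

definition esym :: "real \<Rightarrow> nat set \<Rightarrow> nat \<Rightarrow> real" where
  "esym \<tau> A n = (\<Sum>S | S \<subseteq> A \<and> card S = n. \<Prod>a\<in>S. \<tau> ^ a)"

lemma dist_pow_sum_on_1:
  assumes A: "finite A"
  shows "dist_pow_sum_on \<tau> A n (\<lambda>_. 1) = fact n * esym \<tau> A n"
proof -
  define T where "T = {S. S \<subseteq> A \<and> card S = n}"
  have "finite T" unfolding T_def using A by (simp add: finite_subset[of _ "Pow A"])
  have "dist_pow_sum_on \<tau> A n (\<lambda>_. 1) = (\<Sum>xs\<in>dlists n A. \<Prod>a\<in>set xs. \<tau> ^ a)"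
    unfolding dist_pow_sum_on_def
    by (intro sum.cong refl) (simp add: dlists_def prod_set_distinct_conv_nth)
  also have "\<dots> = (\<Sum>S\<in>T. \<Sum>xs\<in>{xs\<in>dlists n A. set xs = S}. \<Prod>a\<in>set xs. \<tau> ^ a)"
    by (rule sum.group[symmetric, OF finite_dlists[OF A] \<open>finite T\<close>])
      (auto simp: T_def dlists_def distinct_card)
  also have "\<dots> = (\<Sum>S\<in>T. fact n * (\<Prod>a\<in>S. \<tau> ^ a))"
  proof (intro sum.cong refl)
    fix S assume S: "S \<in> T"
    then have "{xs\<in>dlists n A. set xs = S} = permutations_of_set S"
      by (auto simp: dlists_def T_def permutations_of_set_def distinct_card)
    then have "(\<Sum>xs\<in>{xs\<in>dlists n A. set xs = S}. \<Prod>a\<in>set xs. \<tau> ^ a) =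
               (\<Sum>xs\<in>permutations_of_set S. \<Prod>a\<in>S. \<tau> ^ a)"
      by (auto simp: permutations_of_set_def intro: sum.cong)
    moreover have "finite S" using S A finite_subset unfolding T_def by blast
    ultimately show "(\<Sum>xs\<in>{xs\<in>dlists n A. set xs = S}. \<Prod>a\<in>set xs. \<tau> ^ a) = fact n * (\<Prod>a\<in>S. \<tau> ^ a)"
      using S by (simp add: T_def)
  qed
  finally show ?thesis by (simp add: esym_def T_def sum_distrib_left)
qed

lemma prod_one_plus_eq_sum_esym:
  fixes c :: "'a :: real_field"
  assumes A: "finite A" and M: "card A \<le> M"
  shows "(\<Prod>a\<in>A. 1 + c * of_real (\<tau> ^ a)) = (\<Sum>n\<le>M. c ^ n * of_real (esym \<tau> A n))"
proof -
  have "(\<Prod>a\<in>A. 1 + c * of_real (\<tau> ^ a)) = (\<Sum>X\<in>Pow A. (\<Prod>a\<in>X. c * of_real (\<tau> ^ a)) * (\<Prod>a\<in>A - X. 1))"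
    using prod_add[OF A, of "\<lambda>a. c * of_real (\<tau> ^ a)" "\<lambda>_. 1"] by (simp add: add.commute)
  also have "\<dots> = (\<Sum>X\<in>Pow A. c ^ card X * of_real (\<Prod>a\<in>X. \<tau> ^ a))"
    by (simp add: prod.distrib of_real_prod)
  also have "\<dots> = (\<Sum>n\<le>M. \<Sum>X\<in>{X\<in>Pow A. card X = n}. c ^ card X * of_real (\<Prod>a\<in>X. \<tau> ^ a))"
  proof (rule sum.group[symmetric])
    show "card ` Pow A \<subseteq> {..M}"
      using card_mono[OF A] M by (auto intro: order_trans)
  qed (use A in auto)
  also have "\<dots> = (\<Sum>n\<le>M. c ^ n * of_real (esym \<tau> A n))"
  proof (intro sum.cong refl)
    fix n
    have "{X\<in>Pow A. card X = n} = {S. S \<subseteq> A \<and> card S = n}" by auto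
    then show "(\<Sum>X\<in>{X\<in>Pow A. card X = n}. c ^ card X * of_real (\<Prod>a\<in>X. \<tau> ^ a)) =
               c ^ n * of_real (esym \<tau> A n)"
      by (simp add: esym_def sum_distrib_left of_real_sum)
  qed
  finally show ?thesis .
qed

lemma esym_nonneg: "0 < \<tau> \<Longrightarrow> 0 \<le> esym \<tau> A n"
  unfolding esym_def by (intro sum_nonneg prod_nonneg) auto

lemma esym_eq_0:
  assumes "finite A" "card A < n"
  shows "esym \<tau> A n = 0"
proof -
  have "{S. S \<subseteq> A \<and> card S = n} = {}"
    using card_mono[OF assms(1)] assms(2) by (auto simp: not_less[symmetric])
  then show ?thesis unfolding esym_def by (simp only: sum.empty)
qed

lemma esym_le_exp:
  assumes "0 < \<tau>" "finite A" "0 \<le> r"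
  shows "r ^ n * esym \<tau> A n \<le> exp (r * (\<Sum>a\<in>A. \<tau> ^ a))"
proof -
  define M where "M = max n (card A)"
  have "r ^ n * esym \<tau> A n \<le> (\<Sum>k\<le>M. r ^ k * esym \<tau> A k)"
    by (rule member_le_sum[where f="\<lambda>k. r ^ k * esym \<tau> A k"])
      (use assms esym_nonneg in \<open>auto simp: M_def\<close>)
  also have "\<dots> = (\<Sum>k\<le>M. r ^ k * of_real (esym \<tau> A k))" by simp
  also have "\<dots> = (\<Prod>a\<in>A. 1 + r * of_real (\<tau> ^ a))"
    by (rule prod_one_plus_eq_sum_esym[symmetric, OF assms(2)]) (simp add: M_def)
  also have "\<dots> \<le> (\<Prod>a\<in>A. exp (r * \<tau> ^ a))"
    by (rule prod_mono) (use assms in auto)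
  also have "\<dots> = exp (r * (\<Sum>a\<in>A. \<tau> ^ a))"
    by (simp add: exp_sum[OF assms(2)] sum_distrib_left)
  finally show ?thesis .
qed

lemma esym_tendsto:
  assumes "0 < \<tau>" "\<tau> < 1"
  shows "(\<lambda>N. esym \<tau> {1..N} n) \<longlonglongrightarrow> dist_pow_sum \<tau> n (\<lambda>_. 1) / fact n"
proof -
  have "dist_pow_sum_on \<tau> {1..N} n (\<lambda>_. 1) = fact n * esym \<tau> {1..N} n" for N
    by (rule dist_pow_sum_on_1) simp
  then have "(\<lambda>N. fact n * esym \<tau> {1..N} n) \<longlonglongrightarrow> dist_pow_sum \<tau> n (\<lambda>_. 1)"
    using dist_pow_sum_on_tendsto[OF assms, of "\<lambda>_. 1" n] by simp
  from tendsto_divide[OF this tendsto_const[of "fact n"]] show ?thesis by simp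
qed

lemma pow_sum_on_le_pow_sum:
  assumes "0 < \<tau>" "\<tau> < 1" "1 \<le> k"
  shows "pow_sum_on \<tau> {1..N} k \<le> pow_sum \<tau> k"
proof (rule incseq_le[OF _ pow_sum_on_tendsto[OF assms]])
  show "incseq (\<lambda>N. pow_sum_on \<tau> {1..N} k)"
    unfolding incseq_def pow_sum_on_def by (intro allI impI sum_mono2) (use assms in auto)
qed

lemma norm_esym_term_le:
  assumes "0 < \<tau>" "\<tau> < 1" and r: "0 < r"
  shows "norm (c ^ k * complex_of_real (esym \<tau> {1..N} k)) \<le> exp (r * (\<tau> / (1 - \<tau>))) * (norm c / r) ^ k"
proof -
  have "r ^ k * esym \<tau> {1..N} k \<le> exp (r * (\<Sum>a\<in>{1..N}. \<tau> ^ a))"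
    using esym_le_exp assms by simp
  also have "\<dots> \<le> exp (r * (\<tau> / (1 - \<tau>)))"
  proof -
    have "(\<Sum>a\<in>{1..N}. \<tau> ^ a) \<le> \<tau> / (1 - \<tau>)"
      using pow_sum_on_le_pow_sum[OF assms(1,2) order.refl, of N] by (simp add: pow_sum_on_def pow_sum_def)
    then have "r * (\<Sum>a\<in>{1..N}. \<tau> ^ a) \<le> r * (\<tau> / (1 - \<tau>))"
      using r by (intro mult_left_mono) auto
    then show ?thesis by simp
  qed
  finally have bound: "r ^ k * esym \<tau> {1..N} k \<le> exp (r * (\<tau> / (1 - \<tau>)))" .
  have "norm (c ^ k * complex_of_real (esym \<tau> {1..N} k)) = (norm c / r) ^ k * (r ^ k * esym \<tau> {1..N} k)"
    using r esym_nonneg[OF assms(1)] by (simp add: norm_mult norm_power power_divide)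
  also have "\<dots> \<le> (norm c / r) ^ k * exp (r * (\<tau> / (1 - \<tau>)))"
    using bound r by (intro mult_left_mono) auto
  finally show ?thesis by (simp add: mult.commute)
qed

lemma prod_one_plus_tendsto_prodinf:
  fixes c :: complex
  assumes "0 < \<tau>" "\<tau> < 1"
  shows "(\<lambda>N. \<Prod>a\<in>{1..N}. 1 + c * complex_of_real (\<tau> ^ a)) \<longlonglongrightarrow> (\<Prod>k. 1 + c * complex_of_real \<tau> ^ Suc k)"
proof -
  define f where "f = (\<lambda>k. 1 + c * complex_of_real \<tau> ^ Suc k)"
  have "summable (\<lambda>k. norm c * \<tau> * \<tau> ^ k)"
    using assms by (intro summable_mult summable_geometric) auto
  then have "summable (\<lambda>k. norm (f k - 1))"
    using assms by (simp add: f_def norm_mult norm_power mult_ac)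
  then have "convergent_prod f"
    by (intro abs_convergent_prod_imp_convergent_prod summable_imp_abs_convergent_prod)
  moreover have "(\<Prod>a\<in>{1..Suc n}. 1 + c * complex_of_real (\<tau> ^ a)) = (\<Prod>i\<le>n. f i)" for n
  proof -
    have "{1..Suc n} = Suc ` {..n}" by (simp add: image_Suc_atMost)
    then show ?thesis by (simp add: prod.reindex f_def)
  qed
  ultimately have "(\<lambda>n. \<Prod>a\<in>{1..Suc n}. 1 + c * complex_of_real (\<tau> ^ a)) \<longlonglongrightarrow> prodinf f"
    using convergent_prod_LIMSEQ by simp
  then show ?thesis unfolding f_def by (rule LIMSEQ_imp_Suc)
qed

lemma suminf_esym:
  fixes c :: "'a :: {real_normed_field, banach}"
  assumes "finite A"
  shows "(\<Sum>k. c ^ k * of_real (esym \<tau> A k)) = (\<Prod>a\<in>A. 1 + c * of_real (\<tau> ^ a))"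
proof -
  have "(\<Sum>k. c ^ k * of_real (esym \<tau> A k)) = (\<Sum>k\<le>card A. c ^ k * of_real (esym \<tau> A k))"
    using assms by (intro suminf_finite) (auto simp: esym_eq_0)
  also have "\<dots> = (\<Prod>a\<in>A. 1 + c * of_real (\<tau> ^ a))"
    by (rule prod_one_plus_eq_sum_esym[symmetric, OF assms order.refl])
  finally show ?thesis .
qed

text \<open>Letting \<open>N \<rightarrow> \<infinity>\<close> in \<open>\<Prod>a=1..N. (1 + c \<tau>\<^sup>a) = \<Sum>k. c\<^sup>k esym \<tau> {1..N} k\<close>;
  the interchange of limit and sum is justified by Tannery's theorem.\<close>

lemma sums_dist_pow_sum_prodinf:
  fixes c :: complex
  assumes \<tau>: "0 < \<tau>" "\<tau> < 1"
  shows "(\<lambda>k. c ^ k * complex_of_real (dist_pow_sum \<tau> k (\<lambda>_. 1) / fact k))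
           sums (\<Prod>k. 1 + c * complex_of_real \<tau> ^ Suc k)"
proof -
  define r where "r = 2 * norm c + 1"
  have r: "0 < r" "norm c / r < 1" by (auto simp: r_def add_nonneg_pos divide_simps)
  define M where "M k = exp (r * (\<tau> / (1 - \<tau>))) * (norm c / r) ^ k" for k
  define b where "b k = c ^ k * complex_of_real (dist_pow_sum \<tau> k (\<lambda>_. 1) / fact k)" for k
  have "summable M"
    unfolding M_def using r by (intro summable_mult summable_geometric) auto
  have "eventually (\<lambda>N. summable (\<lambda>k. norm (c ^ k * complex_of_real (esym \<tau> {1..N} k)))) sequentially
      \<and> summable (\<lambda>k. norm (b k))
      \<and> (\<lambda>N. \<Sum>k. c ^ k * complex_of_real (esym \<tau> {1..N} k)) \<longlonglongrightarrow> suminf b"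
  proof (rule tannerys_theorem[OF _ _ \<open>summable M\<close>])
    show "(\<lambda>N. c ^ k * complex_of_real (esym \<tau> {1..N} k)) \<longlonglongrightarrow> b k" for k
      unfolding b_def by (intro tendsto_intros esym_tendsto[OF \<tau>])
    show "\<forall>\<^sub>F (k, N) in sequentially \<times>\<^sub>F sequentially.
            norm (c ^ k * complex_of_real (esym \<tau> {1..N} k)) \<le> M k"
      unfolding M_def using norm_esym_term_le[OF \<tau> r(1)] by (intro always_eventually) auto
  qed simp
  then have tannery: "summable (\<lambda>k. norm (b k))"
      "(\<lambda>N. \<Sum>k. c ^ k * complex_of_real (esym \<tau> {1..N} k)) \<longlonglongrightarrow> suminf b"
    by blast+
  have "(\<lambda>N. \<Sum>k. c ^ k * complex_of_real (esym \<tau> {1..N} k)) \<longlonglongrightarrow>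
      (\<Prod>k. 1 + c * complex_of_real \<tau> ^ Suc k)"
    using prod_one_plus_tendsto_prodinf[OF \<tau>] by (simp add: suminf_esym)
  then have "suminf b = (\<Prod>k. 1 + c * complex_of_real \<tau> ^ Suc k)"
    using LIMSEQ_unique tannery(2) by blast
  then show ?thesis
    using summable_sums[OF summable_norm_cancel[OF tannery(1)]] unfolding b_def by simp
qed

lemma (in star_loop_tau) fredholm_term_K1:
  "fredholm_term \<Gamma> (K1 \<tau> x t) lam k = (- lam) ^ k * complex_of_real (dist_pow_sum \<tau> k (\<lambda>_. 1) / fact k)"
  using has_multi_cint_imp_multi_cint[OF has_multi_cint_kernel_det_indexed, of "\<lambda>_. 1" k x t]
  unfolding kernel_det_indexed_const_index K1_pow_1 by (simp add: fredholm_term_def)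

theorem proposition4:
  fixes \<tau> t :: real and x :: int and \<Gamma> :: "real \<Rightarrow> complex" and lam :: complex
  assumes "0 < \<tau>" "\<tau> < 1" "0 \<le> t"
    and "valid_path \<Gamma>" "simple_path \<Gamma>" "pathfinish \<Gamma> = pathstart \<Gamma>"
    and "1 \<notin> path_image \<Gamma>" "winding_number \<Gamma> 1 = 1"
    and "1 / complex_of_real \<tau> \<notin> path_image \<Gamma>"
    and "winding_number \<Gamma> (1 / complex_of_real \<tau>) = 0"
    and "\<forall>z\<in>path_image \<Gamma>. \<forall>s\<in>{0..<1::real}. complex_of_real s * z \<in> inside (path_image \<Gamma>)"
  shows "summable (fredholm_term \<Gamma> (K1 \<tau> x t) lam) \<and>
         fredholm_det \<Gamma> (K1 \<tau> x t) lam = (\<Prod>k. 1 - lam * complex_of_real \<tau> ^ Suc k)"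
proof -
  have "1 \<notin> outside (path_image \<Gamma>)"
    using winding_number_zero_in_outside[OF valid_path_imp_path[OF assms(4)] assms(6)] assms(8) by force
  then have "1 \<in> inside (path_image \<Gamma>)"
    using assms(7) by (simp add: outside_inside)
  then interpret star_loop \<Gamma>
    by unfold_locales (use assms(4-6,8,11) in auto)
  have "1 / complex_of_real \<tau> \<notin> inside P"
    using winding_number_inside assms(10) by force
  then interpret star_loop_tau \<Gamma> \<tau>
    by unfold_locales (use assms(1,2,9) in \<open>simp_all add: outside_inside\<close>)
  have "fredholm_term \<Gamma> (K1 \<tau> x t) lam =
        (\<lambda>k. (- lam) ^ k * complex_of_real (dist_pow_sum \<tau> k (\<lambda>_. 1) / fact k))"
    by (rule ext) (rule fredholm_term_K1)
  then have "fredholm_term \<Gamma> (K1 \<tau> x t) lam sums (\<Prod>k. 1 - lam * complex_of_real \<tau> ^ Suc k)"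
    using sums_dist_pow_sum_prodinf[OF assms(1,2), of "- lam"] by simp
  then show ?thesis by (simp add: sums_iff fredholm_det_def)
qed

end
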